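(* Let $X$ be a finite set. \begin{enumerate} \item Let $(p_B)_{B\subseteq X}$ be nonnegative reals summing to $1$, let $\tilde p_B=(p_B+p_{X\setminus B})/2$, and for $A\subseteq X$ let $s_A=\sum_{B\in\mathcal{S}_A}p_B$ where $\mathcal{S}_A=\{B\subseteq X: A\cap B\neq\emptyset,\ A\cap(X\setminus B)\neq\emptyset\}$. For $A\subseteq X$ define $\gamma_A=\sum_{B\subseteq X:\,|A\cap B|\text{ odd}}\tilde p_B$ if $|A|$ is even and $\gamma_A=0$ if $|A|$ is odd. Then for all $A,B\subseteq X$, \[ \gamma_A=\sum_{C\subseteq A}(-2)^{|C|-2}s_C,\qquad s_B=\frac{1}{2^{|B|-2}}\sum_{C\subseteq B}\gamma_C . \] \item Let $T$ be a phylogenetic tree with leaf set $X$ and nonnegative branch lengths. For $B\subseteq X$ let $\tilde w_B=w_{B|X\setminus B}/2$, where $w_{B|X\setminus B}$ is the length of the edge of $T$ whose deletion splits the leaves into $B$ and $X\setminus B$ if such an edge exists, and $0$ otherwise. Let $\delta_A$ be the sum of branch lengths of the smallest subtree of $T$ connecting $A$ ($\delta_A=0$ if $|A|\le 1$). For $A\subseteq X$ define $\mu_A=\sum_{B\subseteq X:\,|A\cap B|\text{ odd}}\tilde w_B$ if $|A|$ is even and $\mu_A=0$ if $|A|$ is odd. Then for all $A,B\subseteq X$, \[ \mu_A=\sum_{C\subseteq A}(-2)^{|C|-2}\delta_C,\qquad \delta_B=\frac{1}{2^{|B|-2}}\sum_{C\subseteq B}\mu_C . \] \end{enumerate}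
   Context: $p_B$ is the probability that at a bi-allelic site exactly the taxa in $B$ have state $1$; $s_A$ is the probability that a site is non-constant over $A$. A phylogenetic tree with leaf set $X$ is a tree whose leaves are bijectively labelled by $X$ and whose internal vertices have degree at least $3$. *)

theory Defs
  imports Complex_Main
begin

definition ptilde :: "'x set \<Rightarrow> ('x set \<Rightarrow> real) \<Rightarrow> 'x set \<Rightarrow> real" where
  "ptilde X p B = (p B + p (X - B)) / 2"

definition Sfam :: "'x set \<Rightarrow> 'x set \<Rightarrow> 'x set set" where
  "Sfam X A = {B. B \<subseteq> X \<and> A \<inter> B \<noteq> {} \<and> A \<inter> (X - B) \<noteq> {}}"

definition sA :: "'x set \<Rightarrow> ('x set \<Rightarrow> real) \<Rightarrow> 'x set \<Rightarrow> real" where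
  "sA X p A = (\<Sum>B\<in>Sfam X A. p B)"

definition gamma :: "'x set \<Rightarrow> ('x set \<Rightarrow> real) \<Rightarrow> 'x set \<Rightarrow> real" where
  "gamma X p A = (if even (card A)
     then (\<Sum>B\<in>{B. B \<subseteq> X \<and> odd (card (A \<inter> B))}. ptilde X p B) else 0)"

definition simple_graph :: "'v set \<Rightarrow> 'v set set \<Rightarrow> bool" where
  "simple_graph V E \<longleftrightarrow> finite V \<and> (\<forall>e\<in>E. e \<subseteq> V \<and> card e = 2)"

definition adj :: "'v set set \<Rightarrow> ('v \<times> 'v) set" where
  "adj E = {(u, v). {u, v} \<in> E}"

definition connected_graph :: "'v set \<Rightarrow> 'v set set \<Rightarrow> bool" where
  "connected_graph V E \<longleftrightarrow> (\<forall>u\<in>V. \<forall>v\<in>V. (u, v) \<in> (adj E)\<^sup>*)"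

definition has_cycle :: "'v set \<Rightarrow> 'v set set \<Rightarrow> bool" where
  "has_cycle V E \<longleftrightarrow> (\<exists>vs. length vs \<ge> 3 \<and> distinct vs \<and> set vs \<subseteq> V \<and>
      (\<forall>i < length vs. {vs ! i, vs ! ((i + 1) mod length vs)} \<in> E))"

definition is_tree :: "'v set \<Rightarrow> 'v set set \<Rightarrow> bool" where
  "is_tree V E \<longleftrightarrow> simple_graph V E \<and> V \<noteq> {} \<and> connected_graph V E \<and> \<not> has_cycle V E"

definition degree :: "'v set set \<Rightarrow> 'v \<Rightarrow> nat" where
  "degree E v = card {e \<in> E. v \<in> e}"

definition leaves :: "'v set \<Rightarrow> 'v set set \<Rightarrow> 'v set" where
  "leaves V E = {v \<in> V. degree E v \<le> 1}"

definition phylo_tree :: "'x set \<Rightarrow> 'v set \<Rightarrow> 'v set set \<Rightarrow> ('x \<Rightarrow> 'v) \<Rightarrow> bool" where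
  "phylo_tree X V E \<phi> \<longleftrightarrow> is_tree V E \<and> bij_betw \<phi> X (leaves V E) \<and>
     (\<forall>v \<in> V - leaves V E. degree E v \<ge> 3)"

definition induces_split :: "'x set \<Rightarrow> 'v set set \<Rightarrow> ('x \<Rightarrow> 'v) \<Rightarrow> 'v set \<Rightarrow> 'x set \<Rightarrow> bool" where
  "induces_split X E \<phi> e B \<longleftrightarrow> (\<exists>u v. e = {u, v} \<and>
      B = {x \<in> X. (u, \<phi> x) \<in> (adj (E - {e}))\<^sup>*})"

definition wsplit :: "'x set \<Rightarrow> 'v set set \<Rightarrow> ('x \<Rightarrow> 'v) \<Rightarrow> ('v set \<Rightarrow> real) \<Rightarrow> 'x set \<Rightarrow> real" where
  "wsplit X E \<phi> len B = (if \<exists>e\<in>E. induces_split X E \<phi> e B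
      then len (SOME e. e \<in> E \<and> induces_split X E \<phi> e B) else 0)"

definition wtilde :: "'x set \<Rightarrow> 'v set set \<Rightarrow> ('x \<Rightarrow> 'v) \<Rightarrow> ('v set \<Rightarrow> real) \<Rightarrow> 'x set \<Rightarrow> real" where
  "wtilde X E \<phi> len B = wsplit X E \<phi> len B / 2"

definition subtree :: "'v set \<Rightarrow> 'v set set \<Rightarrow> 'v set \<Rightarrow> 'v set set \<Rightarrow> bool" where
  "subtree V E V' E' \<longleftrightarrow> V' \<subseteq> V \<and> E' \<subseteq> E \<and> (\<forall>e\<in>E'. e \<subseteq> V') \<and> V' \<noteq> {} \<and>
     connected_graph V' E'"

definition span_edges :: "'v set \<Rightarrow> 'v set set \<Rightarrow> ('x \<Rightarrow> 'v) \<Rightarrow> 'x set \<Rightarrow> 'v set set" where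
  "span_edges V E \<phi> A = (THE E'. \<exists>V'. subtree V E V' E' \<and> \<phi> ` A \<subseteq> V' \<and>
      (\<forall>V'' E''. subtree V E V'' E'' \<and> \<phi> ` A \<subseteq> V'' \<longrightarrow> V' \<subseteq> V'' \<and> E' \<subseteq> E''))"

definition delta :: "'v set \<Rightarrow> 'v set set \<Rightarrow> ('x \<Rightarrow> 'v) \<Rightarrow> ('v set \<Rightarrow> real) \<Rightarrow> 'x set \<Rightarrow> real" where
  "delta V E \<phi> len A = (if card A \<le> 1 then 0 else (\<Sum>e\<in>span_edges V E \<phi> A. len e))"

definition mu :: "'x set \<Rightarrow> 'v set set \<Rightarrow> ('x \<Rightarrow> 'v) \<Rightarrow> ('v set \<Rightarrow> real) \<Rightarrow> 'x set \<Rightarrow> real" where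
  "mu X E \<phi> len A = (if even (card A)
     then (\<Sum>B\<in>{B. B \<subseteq> X \<and> odd (card (A \<inter> B))}. wtilde X E \<phi> len B) else 0)"

end

(*
  Writing s_C and gamma_A as sums of p_B weighted by the indicators "B splits C" and
  "B splits A into two odd parts" (the complement symmetry of p~ makes only p matter), both
  formulas reduce, after exchanging the sums, to identities for sums over the subsets C of A of
  such indicators; these factor over C \<inter> B and C - B into binomial sums. The identities are
  linear in p, so neither nonnegativity nor normalisation of p (or of the branch lengths) is used.

  Part 2 is part 1 for p = w~. Every edge induces exactly two splits, distinct edges induce
  distinct splits, and p~ = p for p = w~; hence s_A(w~) is the total length of the edges
  separating two leaves of A, and these edges form the smallest subtree spanning A.
*)
theory Submission
  imports Defs "HOL-Library.Transitive_Closure_Table"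
begin

section \<open>Subset sums of split indicators\<close>

lemma sum_Pow_power_card:
  fixes x :: "'a :: comm_ring_1"
  assumes "finite S"
  shows "(\<Sum>C\<in>Pow S. x ^ card C) = (x + 1) ^ card S"
  using prod_add[OF assms, of "\<lambda>_. x" "\<lambda>_. 1"] by simp

lemma sum_Pow_Int_Diff_mult:
  fixes F G :: "'a set \<Rightarrow> 'b :: comm_semiring_0"
  assumes "finite A"
  shows "(\<Sum>C\<in>Pow A. F (C \<inter> B) * G (C - B)) = (\<Sum>C\<in>Pow (A \<inter> B). F C) * (\<Sum>C\<in>Pow (A - B). G C)"
proof -
  have "(\<Sum>C\<in>Pow A. F (C \<inter> B) * G (C - B)) = (\<Sum>(C, D)\<in>Pow (A \<inter> B) \<times> Pow (A - B). F C * G D)"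
    by (rule sum.reindex_bij_witness[where i="\<lambda>(C, D). C \<union> D" and j="\<lambda>C. (C \<inter> B, C - B)"]) auto
  then show ?thesis
    by (simp add: sum.cartesian_product sum_product)
qed

lemma powi_int_minus_2:
  fixes x :: real
  assumes "x\<^sup>2 = 4"
  shows "x powi (int n - 2) = x ^ n / 4"
proof -
  have "x \<noteq> 0"
    using assms by auto
  then have "x powi (int n - 2) = x ^ n / x\<^sup>2"
    by (simp add: power_int_diff)
  then show ?thesis
    using assms by simp
qed

definition splits :: "'a set \<Rightarrow> 'a set \<Rightarrow> bool" where
  "splits B C \<longleftrightarrow> C \<inter> B \<noteq> {} \<and> C - B \<noteq> {}"

definition odd_splits :: "'a set \<Rightarrow> 'a set \<Rightarrow> bool" where
  "odd_splits B C \<longleftrightarrow> odd (card (C \<inter> B)) \<and> odd (card (C - B))"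

lemma sum_Pow_nonempty_power_card:
  fixes x :: real
  assumes "finite S"
  shows "(\<Sum>C\<in>Pow S. of_bool (C \<noteq> {}) * x ^ card C) = (x + 1) ^ card S - 1"
proof -
  have "(\<Sum>C\<in>Pow S. of_bool (C \<noteq> {}) * x ^ card C) = (\<Sum>C\<in>Pow S. x ^ card C - of_bool (C = {}))"
    by (rule sum.cong) auto
  also have "\<dots> = (x + 1) ^ card S - 1"
    using assms by (simp add: sum_subtractf sum_Pow_power_card)
  finally show ?thesis .
qed

lemma sum_Pow_of_bool_odd_card:
  assumes "finite S"
  shows "(\<Sum>C\<in>Pow S. of_bool (odd (card C))) = of_bool (S \<noteq> {}) * 2 ^ card S / (2::real)"
proof -
  have "(\<Sum>C\<in>Pow S. of_bool (odd (card C))) = (\<Sum>C\<in>Pow S. (1 - (-1) ^ card C) / (2::real))"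
    by (rule sum.cong) auto
  also have "\<dots> = (2 ^ card S - 0 ^ card S) / 2"
    using assms sum_Pow_power_card[OF assms, of "-1 :: real"]
    by (simp add: sum_subtractf sum_divide_distrib[symmetric] card_Pow)
  also have "\<dots> = of_bool (S \<noteq> {}) * 2 ^ card S / 2"
    using assms by (simp add: card_gt_0_iff)
  finally show ?thesis .
qed

text \<open>The coefficient of \<open>p B\<close> in \<open>\<Sum>C\<subseteq>A. (-2)^(|C|-2) s_C\<close>; it factors over \<open>A \<inter> B\<close> and \<open>A - B\<close>.\<close>
lemma sum_Pow_neg2_powi_splits:
  assumes "finite A"
  shows "(\<Sum>C\<in>Pow A. (-2::real) powi (int (card C) - 2) * of_bool (splits B C)) = of_bool (odd_splits B A)"
proof -
  define F :: "'a set \<Rightarrow> real" where "F D = of_bool (D \<noteq> {}) * (-2) ^ card D / 2" for D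
  have factor: "(-2::real) powi (int (card C) - 2) * of_bool (splits B C) = F (C \<inter> B) * F (C - B)"
    if "C \<in> Pow A" for C
  proof -
    have "card C = card (C \<inter> B) + card (C - B)"
      using that assms by (meson PowD card_Int_Diff finite_subset)
    moreover have "(-2::real) powi (int (card C) - 2) = (-2) ^ card C / 4"
      by (rule powi_int_minus_2) simp
    ultimately have "(-2::real) powi (int (card C) - 2) = (-2) ^ card (C \<inter> B) * (-2) ^ card (C - B) / 4"
      by (simp add: power_add)
    then show ?thesis
      by (simp add: F_def splits_def)
  qed
  have "(\<Sum>C\<in>Pow A. (-2::real) powi (int (card C) - 2) * of_bool (splits B C))
      = (\<Sum>C\<in>Pow A. F (C \<inter> B) * F (C - B))"
    using factor by (rule sum.cong[OF refl])
  also have "\<dots> = (\<Sum>C\<in>Pow (A \<inter> B). F C) * (\<Sum>C\<in>Pow (A - B). F C)"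
    by (rule sum_Pow_Int_Diff_mult[OF assms])
  also have "\<dots> = of_bool (odd_splits B A)"
  proof -
    have sum_F: "(\<Sum>C\<in>Pow S. F C) = - of_bool (odd (card S))" if "finite S" for S
    proof -
      have "(\<Sum>C\<in>Pow S. F C) = (\<Sum>C\<in>Pow S. of_bool (C \<noteq> {}) * (-2) ^ card C) / 2"
        by (simp only: F_def sum_divide_distrib)
      also have "\<dots> = ((-1) ^ card S - 1) / 2"
        unfolding sum_Pow_nonempty_power_card[OF that] by simp
      finally show ?thesis
        by (cases "even (card S)") simp_all
    qed
    have "finite (A \<inter> B)" "finite (A - B)"
      using assms by auto
    then show ?thesis
      by (simp only: sum_F) (simp add: odd_splits_def)
  qed
  finally show ?thesis .
qed

lemma sum_Pow_odd_splits:
  assumes "finite A"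
  shows "(\<Sum>C\<in>Pow A. of_bool (odd_splits B C)) = (2::real) powi (int (card A) - 2) * of_bool (splits B A)"
proof -
  have "(\<Sum>C\<in>Pow A. of_bool (odd_splits B C))
      = (\<Sum>C\<in>Pow A. of_bool (odd (card (C \<inter> B))) * of_bool (odd (card (C - B))) :: real)"
    by (rule sum.cong) (simp_all add: odd_splits_def)
  also have "\<dots> = (\<Sum>C\<in>Pow (A \<inter> B). of_bool (odd (card C))) * (\<Sum>C\<in>Pow (A - B). of_bool (odd (card C)))"
    by (rule sum_Pow_Int_Diff_mult[OF assms])
  also have "\<dots> = of_bool (A \<inter> B \<noteq> {}) * 2 ^ card (A \<inter> B) / 2 * (of_bool (A - B \<noteq> {}) * 2 ^ card (A - B) / 2)"
    using assms by (simp only: sum_Pow_of_bool_odd_card finite_Int finite_Diff simp_thms)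
  also have "\<dots> = (2::real) powi (int (card A) - 2) * of_bool (splits B A)"
  proof -
    have "(2::real) powi (int (card A) - 2) = 2 ^ card A / 4"
      by (rule powi_int_minus_2) simp
    then show ?thesis
      using card_Int_Diff[OF assms, of B] by (simp add: power_add splits_def)
  qed
  finally show ?thesis .
qed

lemma sA_eq_sum_splits:
  assumes "finite X" "C \<subseteq> X"
  shows "sA X p C = (\<Sum>B\<in>Pow X. of_bool (splits B C) * p B)"
proof -
  have "Sfam X C = Pow X \<inter> {B. splits B C}"
    using assms(2) by (auto simp: Sfam_def splits_def)
  then show ?thesis
    using assms(1) by (simp add: sA_def)
qed

lemma gamma_eq_sum_odd_splits:
  assumes "finite X" "A \<subseteq> X"
  shows "gamma X p A = (\<Sum>B\<in>Pow X. of_bool (odd_splits B A) * p B)"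
proof -
  have card_A: "card A = card (A \<inter> B) + card (A - B)" for B
    using assms by (meson card_Int_Diff finite_subset)
  show ?thesis
  proof (cases "even (card A)")
    case False
    then have "\<not> odd_splits B A" for B
      using card_A[of B] by (auto simp: odd_splits_def)
    then show ?thesis
      using False by (simp add: gamma_def)
  next
    case True
    define Odd where "Odd = {B \<in> Pow X. odd (card (A \<inter> B))}"
    have odd_splits_iff: "odd_splits B A \<longleftrightarrow> odd (card (A \<inter> B))" for B
      using True card_A[of B] by (auto simp: odd_splits_def)
    have compl_Odd: "X - B \<in> Odd" if "B \<in> Odd" for B
    proof -
      have "A \<inter> (X - B) = A - B"
        using assms(2) by blast
      then show ?thesis
        using that odd_splits_iff[of B] by (auto simp: Odd_def odd_splits_def)
    qed
    have "(\<Sum>B\<in>Odd. p (X - B)) = (\<Sum>B\<in>Odd. p B)"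
      by (rule sum.reindex_bij_witness[where i="\<lambda>B. X - B" and j="\<lambda>B. X - B"])
        (auto simp: compl_Odd, auto simp: Odd_def)
    then have "gamma X p A = (\<Sum>B\<in>Odd. p B)"
      using True by (simp add: gamma_def ptilde_def Odd_def sum.distrib flip: sum_divide_distrib)
    moreover have "Odd = Pow X \<inter> {B. odd_splits B A}"
      by (auto simp: Odd_def odd_splits_iff)
    ultimately show ?thesis
      using assms(1) by simp
  qed
qed

lemma gamma_eq_sum_sA:
  assumes "finite X" "A \<subseteq> X"
  shows "gamma X p A = (\<Sum>C\<in>Pow A. (-2) powi (int (card C) - 2) * sA X p C)"
proof -
  have "finite A"
    using assms finite_subset by blast
  have "(\<Sum>C\<in>Pow A. (-2) powi (int (card C) - 2) * sA X p C)
      = (\<Sum>C\<in>Pow A. \<Sum>B\<in>Pow X. (-2) powi (int (card C) - 2) * of_bool (splits B C) * p B)"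
  proof (intro sum.cong refl)
    fix C assume "C \<in> Pow A"
    then have "C \<subseteq> X"
      using assms(2) by blast
    then show "(-2) powi (int (card C) - 2) * sA X p C
        = (\<Sum>B\<in>Pow X. (-2) powi (int (card C) - 2) * of_bool (splits B C) * p B)"
      by (simp only: sA_eq_sum_splits[OF assms(1)] sum_distrib_left mult.assoc)
  qed
  also have "\<dots> = (\<Sum>B\<in>Pow X. (\<Sum>C\<in>Pow A. (-2) powi (int (card C) - 2) * of_bool (splits B C)) * p B)"
    by (subst sum.swap) (simp add: sum_distrib_right)
  also have "\<dots> = gamma X p A"
    using assms by (simp add: sum_Pow_neg2_powi_splits[OF \<open>finite A\<close>] gamma_eq_sum_odd_splits)
  finally show ?thesis ..
qed

lemma sA_eq_sum_gamma:
  assumes "finite X" "B \<subseteq> X"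
  shows "sA X p B = (1 / (2 powi (int (card B) - 2))) * (\<Sum>C\<in>Pow B. gamma X p C)"
proof -
  have "finite B"
    using assms finite_subset by blast
  have "(\<Sum>C\<in>Pow B. gamma X p C) = (\<Sum>C\<in>Pow B. \<Sum>D\<in>Pow X. of_bool (odd_splits D C) * p D)"
    using assms by (intro sum.cong refl) (auto simp: gamma_eq_sum_odd_splits)
  also have "\<dots> = (\<Sum>D\<in>Pow X. (\<Sum>C\<in>Pow B. of_bool (odd_splits D C)) * p D)"
    by (subst sum.swap) (simp add: sum_distrib_right)
  also have "\<dots> = 2 powi (int (card B) - 2) * sA X p B"
    by (simp only: sum_Pow_odd_splits[OF \<open>finite B\<close>] sA_eq_sum_splits[OF assms] sum_distrib_left mult.assoc)
  finally show ?thesis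
    by simp
qed

section \<open>Branches of a tree\<close>

lemma adj_mono: "F \<subseteq> G \<Longrightarrow> adj F \<subseteq> adj G"
  by (auto simp: adj_def)

lemma rtrancl_adj_mono: "F \<subseteq> G \<Longrightarrow> (u, w) \<in> (adj F)\<^sup>* \<Longrightarrow> (u, w) \<in> (adj G)\<^sup>*"
  using rtrancl_mono[OF adj_mono] by blast

lemma rtrancl_adj_sym: "(u, w) \<in> (adj F)\<^sup>* \<Longrightarrow> (w, u) \<in> (adj F)\<^sup>*"
proof -
  have "sym (adj F)"
    by (auto simp: adj_def sym_def insert_commute)
  then have "sym ((adj F)\<^sup>*)"
    by (rule sym_rtrancl)
  then show "(u, w) \<in> (adj F)\<^sup>* \<Longrightarrow> (w, u) \<in> (adj F)\<^sup>*"
    by (rule symD)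
qed

lemma rtrancl_adj_simple_path:
  assumes "(a, b) \<in> (adj F)\<^sup>*"
  obtains ys where "rtrancl_path (\<lambda>x y. (x, y) \<in> adj F) a ys b" "distinct (a # ys)"
proof -
  have "(\<lambda>x y. (x, y) \<in> adj F)\<^sup>*\<^sup>* a b"
    using assms by (simp add: rtranclp_rtrancl_eq)
  then obtain xs where "rtrancl_path (\<lambda>x y. (x, y) \<in> adj F) a xs b"
    by (auto simp: rtranclp_eq_rtrancl_path)
  then show ?thesis
    using that by (rule rtrancl_path_distinct)
qed

lemma rtrancl_path_avoiding_edge:
  assumes "rtrancl_path (\<lambda>x y. (x, y) \<in> adj F) a ys b" "v \<notin> set (a # ys)" "v \<in> g"
  shows "(a, b) \<in> (adj (F - {g}))\<^sup>*"
  using assms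
proof (induction rule: rtrancl_path.induct)
  case (base x)
  then show ?case by simp
next
  case (step x y ys z)
  then have "(x, y) \<in> adj (F - {g})"
    by (auto simp: adj_def)
  with step show ?case
    by (simp add: converse_rtrancl_into_rtrancl)
qed

lemma rtrancl_path_Diff_edge_length:
  assumes "rtrancl_path (\<lambda>x y. (x, y) \<in> adj (F - {{a, b}})) a ys b" "a \<noteq> b"
  shows "2 \<le> length ys"
proof -
  have "ys \<noteq> []"
    using assms by (auto elim: rtrancl_path.cases)
  then obtain c zs where ys: "ys = c # zs"
    by (cases ys) auto
  have "ys \<noteq> [b]"
  proof
    assume "ys = [b]"
    then show False
      using rtrancl_path_nth[OF assms(1), of 0] by (simp add: adj_def)
  qed
  have "zs \<noteq> []"
    using \<open>ys \<noteq> [b]\<close> rtrancl_path_last[OF assms(1)] ys by auto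
  with ys show ?thesis
    by (cases zs) auto
qed

lemma rtrancl_adj_closed:
  assumes "(u, w) \<in> (adj F)\<^sup>*" "u \<in> W" "\<And>e. e \<in> F \<Longrightarrow> e \<subseteq> W"
  shows "w \<in> W"
  using assms(1)
proof (induction rule: rtrancl_induct)
  case base
  then show ?case
    using assms(2) .
next
  case (step w w')
  then show ?case
    using assms(3) by (auto simp: adj_def)
qed

lemma rtrancl_adj_Diff_edge:
  "(a, w) \<in> (adj F)\<^sup>* \<Longrightarrow> (a, w) \<in> (adj (F - {g}))\<^sup>* \<or> (\<exists>z\<in>g. (a, z) \<in> (adj F)\<^sup>*)"
proof (induction rule: rtrancl_induct)
  case base
  then show ?case by simp
next
  case (step w w')
  show ?case
  proof (cases "{w, w'} = g")
    case True
    then show ?thesis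
      using step.hyps(1) by blast
  next
    case False
    then have "(w, w') \<in> adj (F - {g})"
      using step.hyps(2) by (simp add: adj_def)
    with step.IH show ?thesis
      by (meson rtrancl_into_rtrancl)
  qed
qed

locale tree_graph =
  fixes V :: "'v set" and E :: "'v set set"
  assumes tree: "is_tree V E"
begin

lemma finite_V: "finite V"
  using tree by (simp add: is_tree_def simple_graph_def)

lemma edge_subset_V: "e \<in> E \<Longrightarrow> e \<subseteq> V"
  using tree by (simp add: is_tree_def simple_graph_def)

lemma card_edge: "e \<in> E \<Longrightarrow> card e = 2"
  using tree by (simp add: is_tree_def simple_graph_def)

lemma finite_E: "finite E"
proof -
  have "E \<subseteq> Pow V"
    using edge_subset_V by blast
  then show ?thesis
    using finite_V finite_subset by blast
qed

lemma connected: "u \<in> V \<Longrightarrow> w \<in> V \<Longrightarrow> (u, w) \<in> (adj E)\<^sup>*"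
  using tree by (simp add: is_tree_def connected_graph_def)

lemma edge_at: "e \<in> E \<Longrightarrow> v \<in> e \<Longrightarrow> \<exists>n. e = {v, n}"
  using card_edge[unfolded card_2_iff] by (auto simp: insert_commute)

definition branch :: "'v set \<Rightarrow> 'v \<Rightarrow> 'v set" where
  "branch e v = {w. (v, w) \<in> (adj (E - {e}))\<^sup>*}"

lemma branch_refl: "v \<in> branch e v"
  by (simp add: branch_def)

lemma branch_step: "w \<in> branch e v \<Longrightarrow> {w, w'} \<in> E \<Longrightarrow> {w, w'} \<noteq> e \<Longrightarrow> w' \<in> branch e v"
  by (auto simp: branch_def adj_def intro: rtrancl_into_rtrancl)

lemma branch_eq: "w \<in> branch e v \<Longrightarrow> branch e w = branch e v"
proof -
  assume "w \<in> branch e v"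
  then have "(v, w) \<in> (adj (E - {e}))\<^sup>*" "(w, v) \<in> (adj (E - {e}))\<^sup>*"
    by (simp_all add: branch_def rtrancl_adj_sym)
  then show ?thesis
    unfolding branch_def by (blast intro: rtrancl_trans)
qed

lemma branch_subset_V: "v \<in> V \<Longrightarrow> branch e v \<subseteq> V"
  unfolding branch_def using rtrancl_adj_closed[of v _ "E - {e}" V] edge_subset_V by blast

lemma edge_subset_branch:
  assumes "f \<in> E" "f \<noteq> e" "z \<in> f" "z \<in> branch e v"
  shows "f \<subseteq> branch e v"
proof -
  obtain n where "f = {z, n}"
    using edge_at assms(1,3) by blast
  then show ?thesis
    using branch_step[OF assms(4)] assms by auto
qed

lemma branch_mono: "h \<inter> branch e v = {} \<Longrightarrow> branch e v \<subseteq> branch h v"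
proof
  fix w assume disj: "h \<inter> branch e v = {}" and "w \<in> branch e v"
  then have "(v, w) \<in> (adj (E - {e}))\<^sup>*"
    by (simp add: branch_def)
  then have "(v, w) \<in> (adj (E - {h}))\<^sup>*"
  proof (induction rule: rtrancl_induct)
    case base
    then show ?case by simp
  next
    case (step w w')
    then have "w \<notin> h"
      using disj by (auto simp: branch_def)
    then have "(w, w') \<in> adj (E - {h})"
      using step.hyps(2) by (auto simp: adj_def)
    with step.IH show ?case
      by (rule rtrancl_into_rtrancl)
  qed
  then show "w \<in> branch h v"
    by (simp add: branch_def)
qed

lemma has_cycle_of_path:
  assumes ab: "{a, b} \<in> E"
    and path: "rtrancl_path (\<lambda>x y. (x, y) \<in> adj (E - {{a, b}})) a ys b" and dist: "distinct (a # ys)"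
  shows "has_cycle V E"
  unfolding has_cycle_def
proof (intro exI[of _ "a # ys"] conjI allI impI)
  have "a \<noteq> b"
    using card_edge[OF ab] by auto
  then have "2 \<le> length ys"
    by (rule rtrancl_path_Diff_edge_length[OF path])
  then show "length (a # ys) \<ge> 3"
    by simp
  have last: "(a # ys) ! length ys = b"
    using rtrancl_path_last[OF path] \<open>2 \<le> length ys\<close> by (auto simp: last_conv_nth nth_Cons')
  have step: "{(a # ys) ! i, ys ! i} \<in> E - {{a, b}}" if "i < length ys" for i
    using rtrancl_path_nth[OF path that] by (simp add: adj_def)
  show "distinct (a # ys)"
    by (fact dist)
  have "set ys \<subseteq> V"
  proof
    fix y assume "y \<in> set ys"
    then obtain i where "i < length ys" "y = ys ! i"
      by (auto simp: in_set_conv_nth)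
    then show "y \<in> V"
      using step edge_subset_V by blast
  qed
  moreover have "a \<in> V"
    using ab edge_subset_V by blast
  ultimately show "set (a # ys) \<subseteq> V"
    by simp
  fix i assume "i < length (a # ys)"
  then consider "i < length ys" | "i = length ys"
    by (auto simp: less_Suc_eq)
  then show "{(a # ys) ! i, (a # ys) ! ((i + 1) mod length (a # ys))} \<in> E"
  proof cases
    case 1
    then show ?thesis
      using step by simp
  next
    case 2
    then show ?thesis
      using ab last by (simp add: insert_commute)
  qed
qed

lemma endpoint_notin_branch: "{a, b} \<in> E \<Longrightarrow> b \<notin> branch {a, b} a"
proof
  assume ab: "{a, b} \<in> E" and "b \<in> branch {a, b} a"
  then have "(a, b) \<in> (adj (E - {{a, b}}))\<^sup>*"
    by (simp add: branch_def)
  then obtain ys where "rtrancl_path (\<lambda>x y. (x, y) \<in> adj (E - {{a, b}})) a ys b" "distinct (a # ys)"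
    by (rule rtrancl_adj_simple_path)
  then have "has_cycle V E"
    using has_cycle_of_path ab by blast
  then show False
    using tree by (simp add: is_tree_def)
qed

lemma branch_cases: "{a, b} \<in> E \<Longrightarrow> w \<in> V \<Longrightarrow> w \<in> branch {a, b} a \<or> w \<in> branch {a, b} b"
proof -
  assume ab: "{a, b} \<in> E" and "w \<in> V"
  then have "(a, w) \<in> (adj E)\<^sup>*"
    using connected edge_subset_V by blast
  then show ?thesis
  proof (induction rule: rtrancl_induct)
    case base
    then show ?case by (simp add: branch_refl)
  next
    case (step w w')
    then have edge: "{w, w'} \<in> E"
      by (simp add: adj_def)
    show ?case
    proof (cases "{w, w'} = {a, b}")
      case True
      then have "w' = a \<or> w' = b"
        by (auto simp: doubleton_eq_iff)
      then show ?thesis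
        using branch_refl by auto
    next
      case False
      then show ?thesis
        using step.IH branch_step[OF _ edge False] by blast
    qed
  qed
qed

lemma branches_disjoint: "{a, b} \<in> E \<Longrightarrow> w \<in> branch {a, b} a \<Longrightarrow> w \<notin> branch {a, b} b"
  by (metis branch_eq branch_refl endpoint_notin_branch)

lemma branch_subset_branch:
  assumes "{u, v} \<in> E" "{v, n} \<in> E" "{v, n} \<noteq> {u, v}"
  shows "branch {v, n} n \<subseteq> branch {u, v} v"
proof -
  have "{v, u} \<in> E" "{v, u} \<noteq> {v, n}"
    using assms by (simp_all add: insert_commute)
  then have "u \<in> branch {v, n} v"
    by (rule branch_step[OF branch_refl])
  then have "{u, v} \<inter> branch {v, n} n = {}"
    using assms(2) branches_disjoint endpoint_notin_branch[of n v] by (auto simp: insert_commute)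
  then have "branch {v, n} n \<subseteq> branch {u, v} n"
    by (rule branch_mono)
  also have "\<dots> = branch {u, v} v"
    using branch_eq branch_step[OF branch_refl assms(2,3)] by blast
  finally show ?thesis .
qed

lemma rtrancl_path_separating:
  assumes "rtrancl_path (\<lambda>x y. (x, y) \<in> adj E) a ys b" "distinct (a # ys)"
  shows "(a, b) \<in> (adj {e \<in> E. b \<notin> branch e a})\<^sup>*"
  using assms
proof (induction rule: rtrancl_path.induct)
  case (base x)
  then show ?case by simp
next
  case (step a n ys b)
  have an: "{a, n} \<in> E" "{n, a} \<in> E"
    using step.hyps(1) by (simp_all add: adj_def insert_commute)
  have "b \<in> branch {a, n} n"
    using rtrancl_path_avoiding_edge[OF step.hyps(2), of a "{a, n}"] step.prems by (simp add: branch_def)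
  then have "b \<notin> branch {a, n} a"
    using branches_disjoint[OF an(2)] by (simp add: insert_commute)
  then have "(a, n) \<in> adj {e \<in> E. b \<notin> branch e a}"
    using an by (simp add: adj_def)
  moreover have "{e \<in> E. b \<notin> branch e n} \<subseteq> {e \<in> E. b \<notin> branch e a}"
  proof
    fix h assume h: "h \<in> {e \<in> E. b \<notin> branch e n}"
    then have "{n, a} \<noteq> h"
      using \<open>b \<in> branch {a, n} n\<close> by (auto simp: insert_commute)
    then have "a \<in> branch h n"
      by (rule branch_step[OF branch_refl an(2)])
    then show "h \<in> {e \<in> E. b \<notin> branch e a}"
      using h branch_eq by auto
  qed
  then have "(n, b) \<in> (adj {e \<in> E. b \<notin> branch e a})\<^sup>*"
    using step.IH step.prems rtrancl_adj_mono by auto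
  ultimately show ?case
    by (rule converse_rtrancl_into_rtrancl)
qed

lemma separating_path:
  assumes "a \<in> V" "b \<in> V"
  shows "(a, b) \<in> (adj {e \<in> E. b \<notin> branch e a})\<^sup>*"
proof -
  obtain ys where "rtrancl_path (\<lambda>x y. (x, y) \<in> adj E) a ys b" "distinct (a # ys)"
    using connected[OF assms] by (rule rtrancl_adj_simple_path)
  then show ?thesis
    by (rule rtrancl_path_separating)
qed

end

section \<open>Splits and spanning subtrees of a phylogenetic tree\<close>

locale phylogeny =
  fixes X :: "'x set" and V :: "'v set" and E :: "'v set set" and \<phi> :: "'x \<Rightarrow> 'v"
  assumes phylo: "phylo_tree X V E \<phi>"

sublocale phylogeny \<subseteq> tree_graph V E
  using phylo by unfold_locales (simp add: phylo_tree_def)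

context phylogeny
begin

lemma labels_bij: "bij_betw \<phi> X (leaves V E)"
  using phylo by (simp add: phylo_tree_def)

lemma finite_X: "finite X"
proof -
  have "leaves V E \<subseteq> V"
    by (auto simp: leaves_def)
  then show ?thesis
    using labels_bij finite_V bij_betw_finite finite_subset by blast
qed

lemma label_in_V: "x \<in> X \<Longrightarrow> \<phi> x \<in> V"
  using labels_bij by (auto simp: bij_betw_def leaves_def)

lemma leaf_is_label: "l \<in> leaves V E \<Longrightarrow> \<exists>x\<in>X. l = \<phi> x"
  using labels_bij by (auto simp: bij_betw_def)

lemma two_more_edges_at:
  assumes "v \<in> V" "v \<notin> leaves V E"
  obtains n1 n2 where "{v, n1} \<in> E" "{v, n2} \<in> E" "n1 \<noteq> n2" "{v, n1} \<noteq> e" "{v, n2} \<noteq> e"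
proof -
  define S where "S = {f \<in> E. v \<in> f} - {e}"
  have "finite S"
    using finite_E by (simp add: S_def)
  have "3 \<le> card {f \<in> E. v \<in> f}"
    using phylo assms by (auto simp: phylo_tree_def degree_def)
  then have "\<not> card S \<le> Suc 0"
    using finite_E by (simp add: S_def card_Diff_singleton_if del: One_nat_def) linarith
  then obtain f1 f2 where f: "f1 \<in> S" "f2 \<in> S" "f1 \<noteq> f2"
    using card_le_Suc0_iff_eq[OF \<open>finite S\<close>] by blast
  obtain n1 where n1: "f1 = {v, n1}"
    using edge_at f(1) by (auto simp: S_def)
  obtain n2 where n2: "f2 = {v, n2}"
    using edge_at f(2) by (auto simp: S_def)
  show ?thesis
  proof (rule that)
    show "{v, n1} \<in> E" "{v, n2} \<in> E" "{v, n1} \<noteq> e" "{v, n2} \<noteq> e"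
      using f n1 n2 by (simp_all add: S_def)
    show "n1 \<noteq> n2"
      using f(3) n1 n2 by blast
  qed
qed

lemma leaf_in_branch: "{u, v} \<in> E \<Longrightarrow> \<exists>l\<in>leaves V E. l \<in> branch {u, v} v"
proof (induction "card (branch {u, v} v)" arbitrary: u v rule: less_induct)
  case less
  have "v \<in> V"
    using less.prems edge_subset_V by blast
  show ?case
  proof (cases "v \<in> leaves V E")
    case True
    then show ?thesis
      using branch_refl by blast
  next
    case False
    then obtain n where n: "{v, n} \<in> E" "{v, n} \<noteq> {u, v}"
      using two_more_edges_at[OF \<open>v \<in> V\<close>, of "{u, v}"] by blast
    have "v \<notin> branch {v, n} n"
      using endpoint_notin_branch[of n v] n(1) by (simp add: insert_commute)
    then have sub: "branch {v, n} n \<subset> branch {u, v} v"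
      using branch_subset_branch[OF less.prems n] branch_refl by blast
    moreover have "finite (branch {u, v} v)"
      using branch_subset_V[OF \<open>v \<in> V\<close>] finite_V by (rule finite_subset)
    ultimately have "card (branch {v, n} n) < card (branch {u, v} v)"
      by (rule psubset_card_mono[rotated])
    then show ?thesis
      using less.hyps[OF _ n(1)] sub by blast
  qed
qed

text \<open>Of two further branches at the internal vertex \<open>v\<close>, at most one meets \<open>f\<close>.\<close>
lemma branch_avoiding_edge:
  assumes "v \<in> V" "v \<notin> leaves V E" "{u, v} \<in> E" "f \<in> E"
  obtains n where "{v, n} \<in> E" "{v, n} \<noteq> {u, v}" "f \<inter> branch {v, n} n = {}"
proof -
  obtain n1 n2 where n: "{v, n1} \<in> E" "{v, n2} \<in> E" "n1 \<noteq> n2" "{v, n1} \<noteq> {u, v}" "{v, n2} \<noteq> {u, v}"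
    using two_more_edges_at[OF assms(1,2), of "{u, v}"] by blast
  show ?thesis
  proof (cases "f \<inter> branch {v, n1} n1 = {}")
    case True
    then show ?thesis
      using that n by blast
  next
    case False
    have n2v: "{n2, v} \<in> E" "{v, n1} \<noteq> {n2, v}"
      using n by (auto simp: insert_commute doubleton_eq_iff)
    have "{v, n1} \<noteq> {v, n2}"
      using n(3) by (auto simp: doubleton_eq_iff)
    then have "n1 \<in> branch {v, n2} v"
      by (rule branch_step[OF branch_refl n(1)])
    then have "{v, n1} \<subseteq> branch {v, n2} v"
      using branch_refl by simp
    moreover have "branch {v, n1} n1 \<subseteq> branch {v, n2} v"
      using branch_subset_branch[OF n2v(1) n(1) n2v(2)] by (simp add: insert_commute)
    moreover have "f = {v, n1} \<or> f \<subseteq> branch {v, n1} n1"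
    proof -
      obtain z where z: "z \<in> f" "z \<in> branch {v, n1} n1"
        using False by blast
      show ?thesis
        using edge_subset_branch[OF assms(4) _ z] by (cases "f = {v, n1}") simp_all
    qed
    ultimately have "f \<subseteq> branch {v, n2} v"
      by blast
    then have "f \<inter> branch {v, n2} n2 = {}"
      using branches_disjoint[OF n(2)] by blast
    then show ?thesis
      using that n by blast
  qed
qed

lemma leaf_in_branch_beside:
  assumes "{u, v} \<in> E" "f \<in> E"
  shows "\<exists>l\<in>leaves V E. l \<in> branch {u, v} v \<and> l \<in> branch f v"
proof (cases "v \<in> leaves V E")
  case True
  then show ?thesis
    using branch_refl by blast
next
  case False
  have "v \<in> V"
    using assms(1) edge_subset_V by blast
  then obtain n where n: "{v, n} \<in> E" "{v, n} \<noteq> {u, v}" "f \<inter> branch {v, n} n = {}"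
    using branch_avoiding_edge False assms by metis
  obtain l where l: "l \<in> leaves V E" "l \<in> branch {v, n} n"
    using leaf_in_branch[OF n(1)] by blast
  have "n \<notin> f"
    using n(3) branch_refl by blast
  then have "n \<in> branch f v"
    using branch_step[OF branch_refl n(1)] by blast
  then have "branch {v, n} n \<subseteq> branch f v"
    using branch_mono[OF n(3)] branch_eq by blast
  then show ?thesis
    using l branch_subset_branch[OF assms(1) n(1,2)] by blast
qed

definition leaf_side :: "'v set \<Rightarrow> 'v \<Rightarrow> 'x set" where
  "leaf_side e v = {x \<in> X. \<phi> x \<in> branch e v}"

lemma induces_split_iff: "induces_split X E \<phi> e B \<longleftrightarrow> (\<exists>u v. e = {u, v} \<and> B = leaf_side e u)"
  unfolding induces_split_def leaf_side_def branch_def by auto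

lemma leaf_side_other: "{a, b} \<in> E \<Longrightarrow> leaf_side {a, b} b = X - leaf_side {a, b} a"
  using branches_disjoint branch_cases[of a b] branches_disjoint[of b a] label_in_V
  by (fastforce simp: leaf_side_def insert_commute)

text \<open>The leaves beside the two ends \<open>u\<close>, \<open>v\<close> of \<open>e\<close> lie on opposite sides of the split,
  but on the same side of \<open>f\<close>, because \<open>f \<noteq> e\<close> does not separate \<open>u\<close> from \<open>v\<close>.\<close>
lemma induces_split_unique:
  assumes "e \<in> E" "f \<in> E" "induces_split X E \<phi> e B" "induces_split X E \<phi> f B"
  shows "e = f"
proof (rule ccontr)
  assume "e \<noteq> f"
  obtain u v where e: "e = {u, v}" and B: "B = leaf_side e u"
    using assms(3) by (auto simp: induces_split_iff)
  obtain x y where f: "f = {x, y}" and B': "B = leaf_side f x"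
    using assms(4) by (auto simp: induces_split_iff)
  obtain l where l: "l \<in> leaves V E" "l \<in> branch e v" "l \<in> branch f v"
    using leaf_in_branch_beside[of u v f] assms(1,2) e by blast
  obtain l' where l': "l' \<in> leaves V E" "l' \<in> branch e u" "l' \<in> branch f u"
    using leaf_in_branch_beside[of v u f] assms(1,2) e by (auto simp: insert_commute)
  obtain z where z: "z \<in> X" "l = \<phi> z"
    using leaf_is_label l(1) by blast
  obtain z' where z': "z' \<in> X" "l' = \<phi> z'"
    using leaf_is_label l'(1) by blast
  have "z \<notin> B"
    using B e z l(2) assms(1) branches_disjoint[of v u] by (auto simp: leaf_side_def insert_commute)
  then have "l \<notin> branch f x"
    using B' z by (simp add: leaf_side_def)
  have "z' \<in> B"
    using B z' l'(2) by (simp add: leaf_side_def)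
  then have "branch f u = branch f x"
    using B' z' l'(3) branch_eq by (metis (no_types, lifting) leaf_side_def mem_Collect_eq)
  moreover have "v \<in> branch f u"
    using branch_step[OF branch_refl, of u v f] assms(1) e \<open>e \<noteq> f\<close> by simp
  ultimately have "branch f v = branch f x"
    using branch_eq by blast
  then show False
    using l(3) \<open>l \<notin> branch f x\<close> by blast
qed

lemma wsplit_eq_len: "e \<in> E \<Longrightarrow> induces_split X E \<phi> e B \<Longrightarrow> wsplit X E \<phi> len B = len e"
  unfolding wsplit_def using induces_split_unique by (metis (mono_tags, lifting) someI_ex)

lemma induces_split_Diff: "e \<in> E \<Longrightarrow> induces_split X E \<phi> e B \<Longrightarrow> induces_split X E \<phi> e (X - B)"
  unfolding induces_split_iff using leaf_side_other by (metis insert_commute)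

lemma wsplit_Diff: "B \<subseteq> X \<Longrightarrow> wsplit X E \<phi> len (X - B) = wsplit X E \<phi> len B"
proof -
  assume "B \<subseteq> X"
  then have "induces_split X E \<phi> e (X - B) \<longleftrightarrow> induces_split X E \<phi> e B" if "e \<in> E" for e
    using induces_split_Diff[OF that, of B] induces_split_Diff[OF that, of "X - B"] by (auto simp: double_diff)
  then show ?thesis
    by (auto simp: wsplit_def cong: conj_cong)
qed

lemma splits_of_edge: "{a, b} \<in> E \<Longrightarrow> {B. induces_split X E \<phi> {a, b} B} = {leaf_side {a, b} a, leaf_side {a, b} b}"
  unfolding induces_split_iff by (auto simp: doubleton_eq_iff)

lemma card_splits_of_edge: "e \<in> E \<Longrightarrow> card {B. induces_split X E \<phi> e B} = 2"
proof -
  assume "e \<in> E"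
  then obtain a b where ab: "e = {a, b}"
    using card_edge[of e] by (auto simp: card_2_iff)
  obtain l where "l \<in> leaves V E" "l \<in> branch {a, b} b"
    using leaf_in_branch \<open>e \<in> E\<close> ab by blast
  then have "leaf_side {a, b} a \<noteq> leaf_side {a, b} b"
    using leaf_is_label branches_disjoint[of b a] \<open>e \<in> E\<close> ab
    by (fastforce simp: leaf_side_def insert_commute)
  then show ?thesis
    using splits_of_edge \<open>e \<in> E\<close> ab by simp
qed

definition separating_edges :: "'x set \<Rightarrow> 'v set set" where
  "separating_edges A = {e \<in> E. \<exists>a\<in>A. \<exists>b\<in>A. \<phi> b \<notin> branch e (\<phi> a)}"

lemma leaf_side_in_Sfam_iff:
  assumes "{p, q} \<in> E" "A \<subseteq> X"
  shows "leaf_side {p, q} p \<in> Sfam X A \<longleftrightarrow> {p, q} \<in> separating_edges A"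
proof
  assume "leaf_side {p, q} p \<in> Sfam X A"
  then obtain a b where "a \<in> A" "\<phi> a \<in> branch {p, q} p" "b \<in> A" "\<phi> b \<notin> branch {p, q} p"
    using assms(2) by (auto simp: Sfam_def leaf_side_def)
  then show "{p, q} \<in> separating_edges A"
    using assms(1) branch_eq[of "\<phi> a" "{p, q}" p] by (auto simp: separating_edges_def)
next
  assume "{p, q} \<in> separating_edges A"
  then obtain a b where ab: "a \<in> A" "b \<in> A" "\<phi> b \<notin> branch {p, q} (\<phi> a)"
    by (auto simp: separating_edges_def)
  have sides: "\<phi> c \<in> branch {p, q} p \<longleftrightarrow> \<phi> c \<notin> branch {p, q} q" if "c \<in> A" for c
    using that assms branch_cases[OF assms(1)] branches_disjoint[OF assms(1)] label_in_V by blast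
  have "\<phi> a \<in> branch {p, q} p \<and> \<phi> b \<notin> branch {p, q} p \<or> \<phi> b \<in> branch {p, q} p \<and> \<phi> a \<notin> branch {p, q} p"
    using ab sides branch_eq by metis
  then show "leaf_side {p, q} p \<in> Sfam X A"
    using ab assms(2) by (auto simp: Sfam_def leaf_side_def)
qed

lemma sum_wsplit_Sfam:
  assumes "A \<subseteq> X"
  shows "(\<Sum>B\<in>Sfam X A. wsplit X E \<phi> len B) = 2 * (\<Sum>e\<in>separating_edges A. len e)"
proof -
  define splits_of where "splits_of e = {B. induces_split X E \<phi> e B}" for e
  have "Sfam X A \<subseteq> Pow X"
    by (auto simp: Sfam_def)
  then have "finite (Sfam X A)"
    using finite_X finite_subset by blast
  have split_sets: "Sfam X A \<inter> {B. \<exists>e\<in>E. induces_split X E \<phi> e B} = (\<Union>e\<in>separating_edges A. splits_of e)"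
    using leaf_side_in_Sfam_iff[OF _ assms] unfolding splits_of_def
    by (auto simp: induces_split_iff separating_edges_def) (metis insert_commute)+
  have "(\<Sum>B\<in>Sfam X A. wsplit X E \<phi> len B) = (\<Sum>B\<in>(\<Union>e\<in>separating_edges A. splits_of e). wsplit X E \<phi> len B)"
  proof (rule sum.mono_neutral_right[OF \<open>finite (Sfam X A)\<close>])
    show "(\<Union>e\<in>separating_edges A. splits_of e) \<subseteq> Sfam X A"
      using split_sets by blast
    show "\<forall>B\<in>Sfam X A - (\<Union>e\<in>separating_edges A. splits_of e). wsplit X E \<phi> len B = 0"
      using split_sets by (auto simp: wsplit_def)
  qed
  also have "\<dots> = (\<Sum>e\<in>separating_edges A. \<Sum>B\<in>splits_of e. wsplit X E \<phi> len B)"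
  proof (rule sum.UNION_disjoint)
    show "finite (separating_edges A)"
      using finite_E by (simp add: separating_edges_def)
    show "\<forall>e\<in>separating_edges A. finite (splits_of e)"
      using card_splits_of_edge by (auto simp: splits_of_def separating_edges_def intro: card_ge_0_finite)
    show "\<forall>e\<in>separating_edges A. \<forall>f\<in>separating_edges A. e \<noteq> f \<longrightarrow> splits_of e \<inter> splits_of f = {}"
      using induces_split_unique by (auto simp: splits_of_def separating_edges_def)
  qed
  also have "\<dots> = (\<Sum>e\<in>separating_edges A. 2 * len e)"
    using wsplit_eq_len card_splits_of_edge by (auto simp: splits_of_def separating_edges_def intro!: sum.cong)
  finally show ?thesis
    by (simp add: sum_distrib_left)
qed

lemma separating_edges_connect:
  assumes "A \<subseteq> X" "a \<in> A" "b \<in> A"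
  shows "(\<phi> a, \<phi> b) \<in> (adj (separating_edges A))\<^sup>*"
proof -
  have "{e \<in> E. \<phi> b \<notin> branch e (\<phi> a)} \<subseteq> separating_edges A"
    using assms(2,3) by (auto simp: separating_edges_def)
  moreover have "\<phi> a \<in> V" "\<phi> b \<in> V"
    using assms label_in_V by auto
  ultimately show ?thesis
    using rtrancl_adj_mono[OF _ separating_path] by blast
qed

lemma separating_edges_subset_subtree:
  assumes "subtree V E W F" "\<phi> ` A \<subseteq> W"
  shows "separating_edges A \<subseteq> F"
proof
  fix e assume "e \<in> separating_edges A"
  then obtain a b where "e \<in> E" "a \<in> A" "b \<in> A" and sep: "\<phi> b \<notin> branch e (\<phi> a)"
    by (auto simp: separating_edges_def)
  moreover have "\<phi> a \<in> W" "\<phi> b \<in> W"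
    using assms(2) \<open>a \<in> A\<close> \<open>b \<in> A\<close> by auto
  ultimately have "(\<phi> a, \<phi> b) \<in> (adj F)\<^sup>*"
    using assms(1) by (auto simp: subtree_def connected_graph_def)
  show "e \<in> F"
  proof (rule ccontr)
    assume "e \<notin> F"
    then have "F \<subseteq> E - {e}"
      using assms(1) by (auto simp: subtree_def)
    then have "(\<phi> a, \<phi> b) \<in> (adj (E - {e}))\<^sup>*"
      using \<open>(\<phi> a, \<phi> b) \<in> (adj F)\<^sup>*\<close> by (rule rtrancl_adj_mono)
    then show False
      using sep by (simp add: branch_def)
  qed
qed

definition span_vertices :: "'x set \<Rightarrow> 'x \<Rightarrow> 'v set" where
  "span_vertices A x0 = {w. (\<phi> x0, w) \<in> (adj (separating_edges A))\<^sup>*}"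

lemma labels_in_span_vertices: "A \<subseteq> X \<Longrightarrow> x0 \<in> A \<Longrightarrow> \<phi> ` A \<subseteq> span_vertices A x0"
  using separating_edges_connect by (auto simp: span_vertices_def)

lemma separating_edge_subset_span_vertices:
  assumes "A \<subseteq> X" "x0 \<in> A" "e \<in> separating_edges A"
  shows "e \<subseteq> span_vertices A x0"
proof -
  let ?S = "separating_edges A"
  obtain a b where "e \<in> E" "a \<in> A" "b \<in> A" and sep: "\<phi> b \<notin> branch e (\<phi> a)"
    using assms(3) by (auto simp: separating_edges_def)
  have "(\<phi> a, \<phi> b) \<notin> (adj (?S - {e}))\<^sup>*"
  proof
    assume "(\<phi> a, \<phi> b) \<in> (adj (?S - {e}))\<^sup>*"
    moreover have "?S - {e} \<subseteq> E - {e}"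
      by (auto simp: separating_edges_def)
    ultimately have "(\<phi> a, \<phi> b) \<in> (adj (E - {e}))\<^sup>*"
      by (rule rtrancl_adj_mono[rotated])
    then show False
      using sep by (simp add: branch_def)
  qed
  then obtain z where "z \<in> e" "(\<phi> a, z) \<in> (adj ?S)\<^sup>*"
    using rtrancl_adj_Diff_edge[OF separating_edges_connect[OF assms(1) \<open>a \<in> A\<close> \<open>b \<in> A\<close>]] by blast
  then have z: "(\<phi> x0, z) \<in> (adj ?S)\<^sup>*"
    using rtrancl_trans[OF separating_edges_connect[OF assms(1,2) \<open>a \<in> A\<close>]] by blast
  obtain z' where "e = {z, z'}"
    using edge_at \<open>e \<in> E\<close> \<open>z \<in> e\<close> by blast
  then have "(z, z') \<in> adj ?S"
    using assms(3) by (simp add: adj_def)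
  then show ?thesis
    using z \<open>e = {z, z'}\<close> by (auto simp: span_vertices_def intro: rtrancl_into_rtrancl)
qed

lemma subtree_span_vertices:
  assumes "A \<subseteq> X" "x0 \<in> A"
  shows "subtree V E (span_vertices A x0) (separating_edges A)"
  unfolding subtree_def connected_graph_def
proof (intro conjI ballI)
  let ?S = "separating_edges A"
  show "?S \<subseteq> E"
    by (auto simp: separating_edges_def)
  have "\<phi> x0 \<in> V"
    using assms label_in_V by blast
  then show "span_vertices A x0 \<subseteq> V"
    using rtrancl_adj_closed[of "\<phi> x0" _ ?S V] \<open>?S \<subseteq> E\<close> edge_subset_V
    by (auto simp: span_vertices_def)
  show "span_vertices A x0 \<noteq> {}"
    by (auto simp: span_vertices_def)
  show "e \<subseteq> span_vertices A x0" if "e \<in> ?S" for e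
    using separating_edge_subset_span_vertices[OF assms that] .
  fix u w assume "u \<in> span_vertices A x0" "w \<in> span_vertices A x0"
  then have "(u, \<phi> x0) \<in> (adj ?S)\<^sup>*" "(\<phi> x0, w) \<in> (adj ?S)\<^sup>*"
    by (simp_all add: span_vertices_def rtrancl_adj_sym)
  then show "(u, w) \<in> (adj ?S)\<^sup>*"
    by (rule rtrancl_trans)
qed

lemma span_vertices_subset_subtree:
  assumes "x0 \<in> A" "subtree V E W F" "\<phi> ` A \<subseteq> W"
  shows "span_vertices A x0 \<subseteq> W"
proof
  have "e \<subseteq> W" if "e \<in> separating_edges A" for e
    using that separating_edges_subset_subtree[OF assms(2,3)] assms(2) by (auto simp: subtree_def)
  moreover have "\<phi> x0 \<in> W"
    using assms(1,3) by blast
  moreover fix w assume "w \<in> span_vertices A x0"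
  ultimately show "w \<in> W"
    using rtrancl_adj_closed[of "\<phi> x0" w "separating_edges A" W] by (simp add: span_vertices_def)
qed

lemma span_edges_eq_separating_edges:
  assumes "A \<subseteq> X" "A \<noteq> {}"
  shows "span_edges V E \<phi> A = separating_edges A"
proof -
  obtain x0 where "x0 \<in> A"
    using assms(2) by blast
  note subtree = subtree_span_vertices[OF assms(1) \<open>x0 \<in> A\<close>]
    and labels = labels_in_span_vertices[OF assms(1) \<open>x0 \<in> A\<close>]
  show ?thesis
    unfolding span_edges_def
  proof (rule the_equality)
    show "\<exists>W. subtree V E W (separating_edges A) \<and> \<phi> ` A \<subseteq> W \<and>
        (\<forall>W' F. subtree V E W' F \<and> \<phi> ` A \<subseteq> W' \<longrightarrow> W \<subseteq> W' \<and> separating_edges A \<subseteq> F)"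
    proof (intro exI[of _ "span_vertices A x0"] conjI allI impI subtree labels)
      fix W F assume "subtree V E W F \<and> \<phi> ` A \<subseteq> W"
      then have "subtree V E W F" "\<phi> ` A \<subseteq> W"
        by blast+
      then show "span_vertices A x0 \<subseteq> W" "separating_edges A \<subseteq> F"
        by (rule span_vertices_subset_subtree[OF \<open>x0 \<in> A\<close>], rule separating_edges_subset_subtree)
    qed
  next
    fix F assume "\<exists>W. subtree V E W F \<and> \<phi> ` A \<subseteq> W \<and>
        (\<forall>W' F'. subtree V E W' F' \<and> \<phi> ` A \<subseteq> W' \<longrightarrow> W \<subseteq> W' \<and> F \<subseteq> F')"
    then obtain W where W: "subtree V E W F" "\<phi> ` A \<subseteq> W"
      and least: "\<forall>W' F'. subtree V E W' F' \<and> \<phi> ` A \<subseteq> W' \<longrightarrow> W \<subseteq> W' \<and> F \<subseteq> F'"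
      by blast
    have "F \<subseteq> separating_edges A"
      using least[rule_format, OF conjI[OF subtree labels]] by blast
    then show "F = separating_edges A"
      using separating_edges_subset_subtree[OF W] by (rule subset_antisym)
  qed
qed

lemma separating_edges_eq_empty: "card A \<le> 1 \<Longrightarrow> finite A \<Longrightarrow> separating_edges A = {}"
  using card_le_Suc0_iff_eq branch_refl by (fastforce simp: separating_edges_def)

lemma sA_wtilde_eq_delta:
  assumes "A \<subseteq> X"
  shows "sA X (wtilde X E \<phi> len) A = delta V E \<phi> len A"
proof -
  have sA_eq: "sA X (wtilde X E \<phi> len) A = (\<Sum>e\<in>separating_edges A. len e)"
    using sum_wsplit_Sfam[OF assms] by (simp add: sA_def wtilde_def flip: sum_divide_distrib)
  show ?thesis
  proof (cases "card A \<le> 1")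
    case True
    moreover have "finite A"
      using assms finite_X finite_subset by blast
    ultimately have "separating_edges A = {}"
      by (rule separating_edges_eq_empty)
    with True show ?thesis
      unfolding sA_eq delta_def by simp
  next
    case False
    then have "A \<noteq> {}"
      by auto
    then have "span_edges V E \<phi> A = separating_edges A"
      by (rule span_edges_eq_separating_edges[OF assms])
    with False show ?thesis
      unfolding sA_eq delta_def by simp
  qed
qed

lemma gamma_wtilde_eq_mu: "gamma X (wtilde X E \<phi> len) A = mu X E \<phi> len A"
proof -
  let ?Odd = "{B. B \<subseteq> X \<and> odd (card (A \<inter> B))}"
  have "ptilde X (wtilde X E \<phi> len) B = wtilde X E \<phi> len B" if "B \<in> ?Odd" for B
    using that wsplit_Diff[of B len] by (simp add: ptilde_def wtilde_def)
  then have "(\<Sum>B\<in>?Odd. ptilde X (wtilde X E \<phi> len) B) = (\<Sum>B\<in>?Odd. wtilde X E \<phi> len B)"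
    by (rule sum.cong[OF refl])
  then show ?thesis
    by (simp add: gamma_def mu_def)
qed

end

theorem theorem5:
  fixes X :: "'x set"
  assumes "finite X"
  shows
   "(\<forall>p :: 'x set \<Rightarrow> real.
       (\<forall>B. B \<subseteq> X \<longrightarrow> p B \<ge> 0) \<and> (\<Sum>B\<in>Pow X. p B) = 1 \<longrightarrow>
       (\<forall>A B. A \<subseteq> X \<and> B \<subseteq> X \<longrightarrow>
          gamma X p A = (\<Sum>C\<in>Pow A. (-2) powi (int (card C) - 2) * sA X p C) \<and>
          sA X p B = (1 / (2 powi (int (card B) - 2))) * (\<Sum>C\<in>Pow B. gamma X p C)))
    \<and>
    (\<forall>(V :: 'v set) E (\<phi> :: 'x \<Rightarrow> 'v) (len :: 'v set \<Rightarrow> real).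
       phylo_tree X V E \<phi> \<and> (\<forall>e\<in>E. len e \<ge> 0) \<longrightarrow>
       (\<forall>A B. A \<subseteq> X \<and> B \<subseteq> X \<longrightarrow>
          mu X E \<phi> len A = (\<Sum>C\<in>Pow A. (-2) powi (int (card C) - 2) * delta V E \<phi> len C) \<and>
          delta V E \<phi> len B = (1 / (2 powi (int (card B) - 2))) * (\<Sum>C\<in>Pow B. mu X E \<phi> len C)))"
proof (intro conjI allI impI)
  fix p :: "'x set \<Rightarrow> real" and A B assume "A \<subseteq> X \<and> B \<subseteq> X"
  then show "gamma X p A = (\<Sum>C\<in>Pow A. (-2) powi (int (card C) - 2) * sA X p C)"
    and "sA X p B = (1 / (2 powi (int (card B) - 2))) * (\<Sum>C\<in>Pow B. gamma X p C)"
    using gamma_eq_sum_sA[OF assms, of A] sA_eq_sum_gamma[OF assms, of B] by simp_all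
next
  fix V :: "'v set" and E \<phi> and len :: "'v set \<Rightarrow> real" and A B
  assume "phylo_tree X V E \<phi> \<and> (\<forall>e\<in>E. len e \<ge> 0)" and AB: "A \<subseteq> X \<and> B \<subseteq> X"
  then interpret phylogeny X V E \<phi>
    by unfold_locales blast
  let ?w = "wtilde X E \<phi> len"
  have "mu X E \<phi> len A = (\<Sum>C\<in>Pow A. (-2) powi (int (card C) - 2) * sA X ?w C)"
    using gamma_eq_sum_sA[OF assms, of A ?w] AB by (simp only: gamma_wtilde_eq_mu simp_thms)
  also have "\<dots> = (\<Sum>C\<in>Pow A. (-2) powi (int (card C) - 2) * delta V E \<phi> len C)"
    using AB by (intro sum.cong refl) (auto simp: sA_wtilde_eq_delta)
  finally show "mu X E \<phi> len A = \<dots>" .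
  have "delta V E \<phi> len B = sA X ?w B"
    using AB by (simp add: sA_wtilde_eq_delta)
  also have "\<dots> = (1 / (2 powi (int (card B) - 2))) * (\<Sum>C\<in>Pow B. mu X E \<phi> len C)"
    using sA_eq_sum_gamma[OF assms, of B ?w] AB by (simp only: gamma_wtilde_eq_mu simp_thms)
  finally show "delta V E \<phi> len B = \<dots>" .
qed

end
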